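(* Let $(S,\mathcal C)$ be a connectoid that has a normal spanning tree $T$. Then there is a bijection between the ends of $(S,\mathcal C)$ and the ends of the (graph-theoretic) tree $T$.
   Context: A connectoid is given by a set $S$ and a set $\mathcal F$ of finite subsets of $S$ such that (i) $F\cup F'\in\mathcal F$ whenever $F,F'\in\mathcal F$ and $F\cap F'\neq\emptyset$, and (ii) $\emptyset\in\mathcal F$ and $\{s\}\in\mathcal F$ for every $s\in S$. A set $C\subseteq S$ is connected if for all $x,y\in C$ there is $F\in\mathcal F$ with $F\subseteq C$ and $x,y\in F$; $\mathcal C$ is the set of connected sets and $(S,\mathcal C)$ is the connectoid. For $S'\subseteq S$, a component of $S'$ is a maximal connected subset of $S'$, and $\mathcal K(S')$ is the set of components of $S'$. "Almost all" means all but finitely many. A necklace is a connected set $N$ for which there is a family $(H_n)_{n\in\mathbb N}$ of finite connected sets with $N=\bigcup_n H_n$ and $H_i\cap H_j\neq\emptyset$ iff $|i-j|\le 1$. For a necklace $N$ and finite $X\subseteq S$, the $X$-tail of $N$ is the unique element of $\mathcal K(N\setminus X)$ containing almost all elements of $N$. Two necklaces are equivalent if for every finite $X\subseteq S$ their $X$-tails lie in the same element of $\mathcal K(S\setminus X)$. An end of $(S,\mathcal C)$ is an equivalence class of necklaces. Ends of the tree $T$ are the usual graph-theoretic ends (equivalence classes of rays). For a rooted tree $T$ with tree order $\le_T$ (root is the minimum) and $t\in V(T)$, let $\mathrm{Down}_T(t)=\{x\in V(T):x\le_T t\}$ and $\mathrm{Down}^\circ_T(t)=\mathrm{Down}_T(t)\setminus\{t\}$.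 A weak normal tree of $(S,\mathcal C)$ is a rooted undirected tree $T$ with $V(T)\subseteq S$ such that (1) for every $C\in\mathcal C$ and every two $\le_T$-incomparable $u,v\in C\cap V(T)$ there is $w\in C$ with $w\le_T u$ and $w\le_T v$, and (2) for all $u\le_T v$ in $V(T)$ there is $C\in\mathcal C$ containing $u$ and $v$ with $C\cap\mathrm{Down}^\circ_T(u)=\emptyset$. It is a normal tree if additionally for every rooted ray $R$ of $T$ (ray starting at the root) there is a necklace containing almost all vertices of $R$. It is spanning if $V(T)=S$. *)

theory Defs
  imports Main
begin

definition connectoid :: "'a set \<Rightarrow> 'a set set \<Rightarrow> bool" where
  "connectoid S \<F> \<longleftrightarrow>
     (\<forall>F\<in>\<F>. finite F \<and> F \<subseteq> S) \<and>
     (\<forall>F\<in>\<F>. \<forall>F'\<in>\<F>. F \<inter> F' \<noteq> {} \<longrightarrow> F \<union> F' \<in> \<F>) \<and>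
     {} \<in> \<F> \<and> (\<forall>s\<in>S. {s} \<in> \<F>)"

definition cn_connected :: "'a set \<Rightarrow> 'a set set \<Rightarrow> 'a set \<Rightarrow> bool" where
  "cn_connected S \<F> C \<longleftrightarrow> C \<subseteq> S \<and>
     (\<forall>x\<in>C. \<forall>y\<in>C. \<exists>F\<in>\<F>. F \<subseteq> C \<and> x \<in> F \<and> y \<in> F)"

definition cn_components :: "'a set \<Rightarrow> 'a set set \<Rightarrow> 'a set \<Rightarrow> 'a set set" where
  "cn_components S \<F> A = {K. K \<subseteq> A \<and> cn_connected S \<F> K \<and>
     (\<forall>K'. K \<subseteq> K' \<and> K' \<subseteq> A \<and> cn_connected S \<F> K' \<longrightarrow> K' = K)}"

definition necklace :: "'a set \<Rightarrow> 'a set set \<Rightarrow> 'a set \<Rightarrow> bool" where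
  "necklace S \<F> N \<longleftrightarrow> cn_connected S \<F> N \<and>
     (\<exists>H :: nat \<Rightarrow> 'a set. (\<forall>n. finite (H n) \<and> cn_connected S \<F> (H n)) \<and>
        N = (\<Union>n. H n) \<and>
        (\<forall>i j. H i \<inter> H j \<noteq> {} \<longleftrightarrow> (i \<le> j + 1 \<and> j \<le> i + 1)))"

definition necklace_tail :: "'a set \<Rightarrow> 'a set set \<Rightarrow> 'a set \<Rightarrow> 'a set \<Rightarrow> 'a set" where
  "necklace_tail S \<F> N X = (THE K. K \<in> cn_components S \<F> (N - X) \<and> finite (N - K))"

definition necklace_equiv :: "'a set \<Rightarrow> 'a set set \<Rightarrow> 'a set \<Rightarrow> 'a set \<Rightarrow> bool" where
  "necklace_equiv S \<F> N N' \<longleftrightarrow>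
     (\<forall>X. finite X \<and> X \<subseteq> S \<longrightarrow>
        (\<exists>K\<in>cn_components S \<F> (S - X).
            necklace_tail S \<F> N X \<subseteq> K \<and> necklace_tail S \<F> N' X \<subseteq> K))"

definition cn_ends :: "'a set \<Rightarrow> 'a set set \<Rightarrow> 'a set set set" where
  "cn_ends S \<F> = {{N'. necklace S \<F> N' \<and> necklace_equiv S \<F> N N'} | N. necklace S \<F> N}"

definition ugraph :: "'a set \<Rightarrow> ('a \<times> 'a) set \<Rightarrow> bool" where
  "ugraph V E \<longleftrightarrow> E \<subseteq> V \<times> V \<and> sym E \<and> irrefl E"

definition gpath :: "'a set \<Rightarrow> ('a \<times> 'a) set \<Rightarrow> 'a list \<Rightarrow> bool" where
  "gpath V E xs \<longleftrightarrow> xs \<noteq> [] \<and> distinct xs \<and> set xs \<subseteq> V \<and>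
     (\<forall>i. Suc i < length xs \<longrightarrow> (xs ! i, xs ! Suc i) \<in> E)"

definition gconnected :: "'a set \<Rightarrow> ('a \<times> 'a) set \<Rightarrow> bool" where
  "gconnected V E \<longleftrightarrow> (\<forall>x\<in>V. \<forall>y\<in>V. \<exists>xs. gpath V E xs \<and> hd xs = x \<and> last xs = y)"

definition acyclic_graph :: "'a set \<Rightarrow> ('a \<times> 'a) set \<Rightarrow> bool" where
  "acyclic_graph V E \<longleftrightarrow> \<not> (\<exists>xs. gpath V E xs \<and> length xs \<ge> 3 \<and> (last xs, hd xs) \<in> E)"

definition is_tree :: "'a set \<Rightarrow> ('a \<times> 'a) set \<Rightarrow> bool" where
  "is_tree V E \<longleftrightarrow> ugraph V E \<and> V \<noteq> {} \<and> gconnected V E \<and> acyclic_graph V E"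

definition tree_le :: "'a set \<Rightarrow> ('a \<times> 'a) set \<Rightarrow> 'a \<Rightarrow> 'a \<Rightarrow> 'a \<Rightarrow> bool" where
  "tree_le V E r x y \<longleftrightarrow> x \<in> V \<and> y \<in> V \<and>
     (\<exists>xs. gpath V E xs \<and> hd xs = r \<and> last xs = y \<and> x \<in> set xs)"

definition tree_down :: "'a set \<Rightarrow> ('a \<times> 'a) set \<Rightarrow> 'a \<Rightarrow> 'a \<Rightarrow> 'a set" where
  "tree_down V E r t = {x \<in> V. tree_le V E r x t}"

definition tree_down_strict :: "'a set \<Rightarrow> ('a \<times> 'a) set \<Rightarrow> 'a \<Rightarrow> 'a \<Rightarrow> 'a set" where
  "tree_down_strict V E r t = tree_down V E r t - {t}"

definition is_ray :: "'a set \<Rightarrow> ('a \<times> 'a) set \<Rightarrow> (nat \<Rightarrow> 'a) \<Rightarrow> bool" where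
  "is_ray V E R \<longleftrightarrow> inj R \<and> (\<forall>n. R n \<in> V \<and> (R n, R (Suc n)) \<in> E)"

definition ray_equiv :: "'a set \<Rightarrow> ('a \<times> 'a) set \<Rightarrow> (nat \<Rightarrow> 'a) \<Rightarrow> (nat \<Rightarrow> 'a) \<Rightarrow> bool" where
  "ray_equiv V E R R' \<longleftrightarrow>
     (\<forall>X. finite X \<longrightarrow> (\<exists>m n xs. (\<forall>k\<ge>m. R k \<notin> X) \<and> (\<forall>k\<ge>n. R' k \<notin> X) \<and>
         gpath (V - X) (E \<inter> ((V - X) \<times> (V - X))) xs \<and> hd xs = R m \<and> last xs = R' n))"

definition graph_ends :: "'a set \<Rightarrow> ('a \<times> 'a) set \<Rightarrow> (nat \<Rightarrow> 'a) set set" where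
  "graph_ends V E = {{R'. is_ray V E R' \<and> ray_equiv V E R R'} | R. is_ray V E R}"

definition weak_normal_tree ::
  "'a set \<Rightarrow> 'a set set \<Rightarrow> 'a set \<Rightarrow> ('a \<times> 'a) set \<Rightarrow> 'a \<Rightarrow> bool" where
  "weak_normal_tree S \<F> V E r \<longleftrightarrow>
     is_tree V E \<and> r \<in> V \<and> V \<subseteq> S \<and>
     (\<forall>C. cn_connected S \<F> C \<longrightarrow>
        (\<forall>u\<in>C \<inter> V. \<forall>v\<in>C \<inter> V. \<not> tree_le V E r u v \<and> \<not> tree_le V E r v u \<longrightarrow>
            (\<exists>w\<in>C. tree_le V E r w u \<and> tree_le V E r w v))) \<and>
     (\<forall>u v. tree_le V E r u v \<longrightarrow>
        (\<exists>C. cn_connected S \<F> C \<and> u \<in> C \<and> v \<in> C \<and> C \<inter> tree_down_strict V E r u = {}))"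

definition normal_tree ::
  "'a set \<Rightarrow> 'a set set \<Rightarrow> 'a set \<Rightarrow> ('a \<times> 'a) set \<Rightarrow> 'a \<Rightarrow> bool" where
  "normal_tree S \<F> V E r \<longleftrightarrow> weak_normal_tree S \<F> V E r \<and>
     (\<forall>R. is_ray V E R \<and> R 0 = r \<longrightarrow>
        (\<exists>N. necklace S \<F> N \<and> finite {n. R n \<notin> N}))"

definition normal_spanning_tree ::
  "'a set \<Rightarrow> 'a set set \<Rightarrow> 'a set \<Rightarrow> ('a \<times> 'a) set \<Rightarrow> 'a \<Rightarrow> bool" where
  "normal_spanning_tree S \<F> V E r \<longleftrightarrow> normal_tree S \<F> V E r \<and> V = S"

end

theory Submission
  imports Defs
begin

text \<open>Fix the normal spanning tree \<open>T\<close> with root \<open>r\<close>. To a necklace or a ray \<open>Y\<close> associate its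
  trunk: the set of vertices \<open>t\<close> with almost all of \<open>Y\<close> in the up-closure of \<open>t\<close>. The trunk is
  always a rooted ray of \<open>T\<close>. For necklaces this uses that \<open>T\<close> is normal: a connected set
  meeting the up-closure of \<open>t\<close> but avoiding the vertices strictly below \<open>t\<close> stays in that
  up-closure, so the tail of the necklace beyond the finite set below \<open>t\<close> sits above one child
  of \<open>t\<close>. Two necklaces, resp. two rays, are equivalent iff they have the same trunk: distinct
  rooted rays are separated by the finite set below the children where they branch, while a common
  vertex of the trunks above a finite set \<open>X\<close> yields a connected region avoiding \<open>X\<close> that contains
  both tails. Finally every rooted ray is its own trunk, and by normality also the trunk of a
  necklace. So both end spaces are in bijection with the set of rooted rays of \<open>T\<close>.\<close>

lemma cofinite_subsets_meet:
  assumes "infinite Y" "finite (Y - A)" "finite (Y - B)"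
  shows "\<exists>x\<in>Y. x \<in> A \<and> x \<in> B"
proof (rule ccontr)
  assume "\<not> ?thesis"
  then have "Y \<subseteq> (Y - A) \<union> (Y - B)" by blast
  then show False using assms finite_subset by blast
qed

lemma bij_betw_classes:
  assumes eq: "\<And>x y. p x \<Longrightarrow> p y \<Longrightarrow> e x y \<longleftrightarrow> k x = k y" and img: "k ` {x. p x} = T"
  shows "bij_betw (\<lambda>c. k (SOME x. x \<in> c)) {{y. p y \<and> e x y} | x. p x} T"
proof -
  let ?f = "\<lambda>c. k (SOME x. x \<in> c)"
  have class_eq: "{y. p y \<and> e x y} = {y. p y \<and> k y = k x}" if "p x" for x
    using eq[OF that] by auto
  have f_class: "?f {y. p y \<and> e x y} = k x" if "p x" for x
  proof -
    have "x \<in> {y. p y \<and> e x y}" using that eq[OF that that] by simp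
    then have "(SOME z. z \<in> {y. p y \<and> e x y}) \<in> {y. p y \<and> e x y}" by (rule someI)
    then show ?thesis using eq[OF that] by auto
  qed
  have "inj_on ?f {{y. p y \<and> e x y} | x. p x}"
  proof (rule inj_onI)
    fix c1 c2 assume "c1 \<in> {{y. p y \<and> e x y} | x. p x}" "c2 \<in> {{y. p y \<and> e x y} | x. p x}"
      and "?f c1 = ?f c2"
    then obtain x1 x2 where "p x1" "c1 = {y. p y \<and> e x1 y}" "p x2" "c2 = {y. p y \<and> e x2 y}"
      and "k x1 = k x2" using f_class by auto
    then show "c1 = c2" using class_eq by simp
  qed
  moreover have "?f ` {{y. p y \<and> e x y} | x. p x} = T"
  proof
    show "?f ` {{y. p y \<and> e x y} | x. p x} \<subseteq> T" using f_class img by auto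
    show "T \<subseteq> ?f ` {{y. p y \<and> e x y} | x. p x}"
    proof
      fix t assume "t \<in> T"
      then obtain x where "p x" "t = k x" using img by blast
      then show "t \<in> ?f ` {{y. p y \<and> e x y} | x. p x}"
        using f_class[of x] by (intro image_eqI[of _ _ "{y. p y \<and> e x y}"]) auto
    qed
  qed
  ultimately show ?thesis unfolding bij_betw_def by blast
qed

section \<open>Paths in graphs\<close>

lemma gpath_iff_successively:
  "gpath V E xs \<longleftrightarrow>
     xs \<noteq> [] \<and> distinct xs \<and> set xs \<subseteq> V \<and> successively (\<lambda>x y. (x, y) \<in> E) xs"
  unfolding gpath_def successively_conv_nth by auto

lemma gpath_appendD: "gpath V E (p @ q) \<Longrightarrow> p \<noteq> [] \<Longrightarrow> gpath V E p"
  unfolding gpath_iff_successively by (auto simp: successively_append_iff)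

lemma gpath_snoc:
  "gpath V E xs \<Longrightarrow> (last xs, y) \<in> E \<Longrightarrow> y \<in> V \<Longrightarrow> y \<notin> set xs \<Longrightarrow> gpath V E (xs @ [y])"
  unfolding gpath_iff_successively by (auto simp: successively_append_iff)

lemma gpath_mono:
  "gpath V E xs \<Longrightarrow> set xs \<subseteq> W \<Longrightarrow> E \<inter> (W \<times> W) \<subseteq> E' \<Longrightarrow> gpath W E' xs"
  unfolding gpath_iff_successively by (auto elim!: successively_mono)

lemma rtrancl_gpath:
  assumes "(a, b) \<in> E\<^sup>*" "a \<in> V" "E \<subseteq> V \<times> V"
  shows "\<exists>xs. gpath V E xs \<and> hd xs = a \<and> last xs = b"
  using assms(1)
proof (induction rule: rtrancl_induct)
  case base
  then show ?case using assms(2) by (intro exI[of _ "[a]"]) (simp add: gpath_def)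
next
  case (step y z)
  obtain xs where xs: "gpath V E xs" "hd xs = a" "last xs = y" using step.IH by blast
  show ?case
  proof (cases "z \<in> set xs")
    case True
    then obtain p q where pq: "xs = p @ z # q" by (meson split_list)
    have "gpath V E (p @ [z])" using gpath_appendD[of V E "p @ [z]" q] xs(1) pq by simp
    moreover have "hd (p @ [z]) = a" using xs(2) pq by (cases p) auto
    ultimately show ?thesis by (intro exI[of _ "p @ [z]"]) simp
  next
    case False
    have "xs \<noteq> []" using xs(1) by (simp add: gpath_def)
    then show ?thesis
      using gpath_snoc[OF xs(1)] xs step.hyps(2) assms(3) False by (intro exI[of _ "xs @ [z]"]) auto
  qed
qed

lemma split_at_first_common:
  assumes "xs \<noteq> []" "last xs \<in> set ys"
  obtains p z rest u w where "xs = p @ z # rest" "ys = u @ z # w" "set p \<inter> set ys = {}"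
proof -
  define p where "p = takeWhile (\<lambda>x. x \<notin> set ys) xs"
  define rest where "rest = dropWhile (\<lambda>x. x \<notin> set ys) xs"
  have "rest \<noteq> []" unfolding rest_def using assms by (metis dropWhile_eq_Nil_conv last_in_set)
  then obtain z rest' where rest: "rest = z # rest'" by (cases rest) auto
  have "z \<in> set ys" using rest unfolding rest_def by (metis dropWhile_eq_Cons_conv)
  then obtain u w where "ys = u @ z # w" by (meson split_list)
  moreover have "xs = p @ z # rest'" using takeWhile_dropWhile_id[of _ xs] rest
    unfolding p_def rest_def by metis
  moreover have "set p \<inter> set ys = {}" unfolding p_def by (auto dest: set_takeWhileD)
  ultimately show ?thesis using that by blast
qed

lemma successively_rev_sym:
  "sym E \<Longrightarrow> successively (\<lambda>x y. (x, y) \<in> E) xs \<Longrightarrow> successively (\<lambda>x y. (x, y) \<in> E) (rev xs)"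
  unfolding successively_rev by (erule successively_mono) (auto simp: sym_def)

text \<open>The cycle follows the first path up to its first vertex \<open>z\<close> on the second one and
  returns to \<open>a\<close> along the second one.\<close>
lemma diverging_gpaths_not_acyclic:
  assumes symE: "sym E" and x: "gpath V E (a # xs)" and y: "gpath V E (a # ys)"
    and ne: "xs \<noteq> []" "ys \<noteq> []" and hd_ne: "hd xs \<noteq> hd ys" and last_eq: "last xs = last ys"
  shows "\<not> acyclic_graph V E"
proof -
  have "last xs \<in> set ys" using last_eq ne(2) by simp
  then obtain p z rest' u w where xsplit: "xs = p @ z # rest'" and ysplit: "ys = u @ z # w"
    and p_off: "set p \<inter> set ys = {}"
    using split_at_first_common ne(1) by metis
  define cyc where "cyc = a # p @ z # rev u"
  have sx: "successively (\<lambda>x y. (x, y) \<in> E) (a # xs)"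
    and sy: "successively (\<lambda>x y. (x, y) \<in> E) (a # ys)"
    using x y unfolding gpath_iff_successively by auto
  have dist: "distinct cyc"
  proof -
    have "distinct (a # p @ z # rest')" using x unfolding xsplit gpath_def by simp
    moreover have "distinct (a # u @ z # w)" using y unfolding ysplit gpath_def by simp
    moreover have "\<forall>x\<in>set p. x \<notin> set u \<and> x \<noteq> z" using p_off ysplit by auto
    ultimately show ?thesis unfolding cyc_def by auto
  qed
  have sub: "set cyc \<subseteq> V" using x y unfolding gpath_def cyc_def xsplit ysplit by auto
  have hd_p: "hd (p @ [z]) = hd xs" using xsplit by (cases p) auto
  have "successively (\<lambda>x y. (x, y) \<in> E) ((p @ [z]) @ rest')"
    using sx xsplit by (simp add: successively_Cons)
  then have s1: "successively (\<lambda>x y. (x, y) \<in> E) (p @ [z])"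
    using successively_append_iff by blast
  have "successively (\<lambda>x y. (x, y) \<in> E) ((u @ [z]) @ w)"
    using sy ysplit by (simp add: successively_Cons)
  then have "successively (\<lambda>x y. (x, y) \<in> E) (u @ [z])"
    using successively_append_iff by blast
  then have s2: "successively (\<lambda>x y. (x, y) \<in> E) (z # rev u)"
    using successively_rev_sym[OF symE] by fastforce
  have "(a, hd xs) \<in> E" using sx ne by (cases xs) auto
  then have "successively (\<lambda>x y. (x, y) \<in> E) (a # p @ [z])"
    using s1 hd_p by (simp add: successively_Cons)
  then have "successively (\<lambda>x y. (x, y) \<in> E) ((a # p @ [z]) @ rev u)"
    using s2 unfolding successively_append_iff by (auto simp: successively_Cons)
  then have succ: "successively (\<lambda>x y. (x, y) \<in> E) cyc" unfolding cyc_def by simp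
  have a_hd: "(hd ys, a) \<in> E" using sy ne symE by (cases ys) (auto simp: sym_def)
  have "length cyc \<ge> 3 \<and> (last cyc, hd cyc) \<in> E"
  proof (cases u)
    case Nil
    then have "z = hd ys" using ysplit by simp
    moreover have "p \<noteq> []" using hd_p hd_ne calculation by auto
    ultimately show ?thesis using a_hd unfolding cyc_def Nil by (cases p) auto
  next
    case (Cons u0 us)
    then show ?thesis using a_hd ysplit unfolding cyc_def by auto
  qed
  moreover have "gpath V E cyc" using dist sub succ unfolding gpath_iff_successively cyc_def by auto
  ultimately show ?thesis unfolding acyclic_graph_def by blast
qed

lemma acyclic_gpath_unique:
  assumes "ugraph V E" "acyclic_graph V E"
  shows "gpath V E xs \<Longrightarrow> gpath V E ys \<Longrightarrow> hd xs = hd ys \<Longrightarrow> last xs = last ys \<Longrightarrow> xs = ys"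
proof (induction xs arbitrary: ys)
  case Nil
  then show ?case by (simp add: gpath_def)
next
  case (Cons a xs)
  define ys' where "ys' = tl ys"
  have "ys \<noteq> []" using Cons.prems(2) by (simp add: gpath_def)
  then have ys: "ys = a # ys'" using Cons.prems(3) unfolding ys'_def by (metis list.collapse list.sel(1))
  have gx: "gpath V E (a # xs)" and gy: "gpath V E (a # ys')" using Cons.prems(1,2) ys by simp_all
  have last_self: "last (a # zs) = a \<longleftrightarrow> zs = []" if "gpath V E (a # zs)" for zs
  proof (cases "zs = []")
    case False
    then have "last (a # zs) \<in> set zs" by simp
    then show ?thesis using that False by (auto simp: gpath_def)
  qed simp
  have "last (a # xs) = last (a # ys')" using Cons.prems(4) unfolding ys .
  then have "xs = [] \<longleftrightarrow> ys' = []" using last_self[OF gx] last_self[OF gy] by metis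
  show ?case
  proof (cases "xs = []")
    case True
    then show ?thesis using ys \<open>xs = [] \<longleftrightarrow> ys' = []\<close> by simp
  next
    case False
    then have ne: "xs \<noteq> []" "ys' \<noteq> []" using \<open>xs = [] \<longleftrightarrow> ys' = []\<close> by auto
    have tl_gpath: "gpath V E zs" if "gpath V E (a # zs)" "zs \<noteq> []" for zs
      using that unfolding gpath_iff_successively by (simp add: successively_Cons)
    have last_eq: "last xs = last ys'" using Cons.prems(4) ne ys by simp
    have "hd xs = hd ys'"
    proof (rule ccontr)
      assume "hd xs \<noteq> hd ys'"
      moreover have "sym E" using assms(1) by (simp add: ugraph_def)
      ultimately show False
        using diverging_gpaths_not_acyclic[OF _ gx gy ne _ last_eq] assms(2) by blast
    qed
    then show ?thesis using Cons.IH[OF tl_gpath[OF gx ne(1)] tl_gpath[OF gy ne(2)] _ last_eq] ys by simp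
  qed
qed

section \<open>Rooted trees\<close>

locale rooted_tree =
  fixes V :: "'a set" and E :: "('a \<times> 'a) set" and r :: 'a
  assumes tree: "is_tree V E" and root_in_V: "r \<in> V"
begin

abbreviation tree_below :: "'a \<Rightarrow> 'a \<Rightarrow> bool" (infix "\<preceq>" 50)
  where "x \<preceq> y \<equiv> tree_le V E r x y"

definition root_path :: "'a \<Rightarrow> 'a list" where
  "root_path y = (THE xs. gpath V E xs \<and> hd xs = r \<and> last xs = y)"

definition depth :: "'a \<Rightarrow> nat" where
  "depth x = length (root_path x)"

definition up :: "'a \<Rightarrow> 'a set" where
  "up t = {x \<in> V. t \<preceq> x}"

lemma ugraph: "ugraph V E" and acyclic: "acyclic_graph V E" and gconnected: "gconnected V E"
  using tree unfolding is_tree_def by auto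

lemma edge_sym: "(x, y) \<in> E \<Longrightarrow> (y, x) \<in> E"
  using ugraph unfolding ugraph_def sym_def by blast

lemma edge_irrefl: "(x, x) \<notin> E"
  using ugraph unfolding ugraph_def irrefl_def by blast

lemma edge_in_V: "(x, y) \<in> E \<Longrightarrow> x \<in> V \<and> y \<in> V"
  using ugraph unfolding ugraph_def by blast

lemma root_path_eqI: "gpath V E xs \<Longrightarrow> hd xs = r \<Longrightarrow> last xs = y \<Longrightarrow> root_path y = xs"
  unfolding root_path_def by (rule the_equality) (auto intro: acyclic_gpath_unique[OF ugraph acyclic])

lemma root_path_gpath:
  assumes "y \<in> V"
  shows "gpath V E (root_path y) \<and> hd (root_path y) = r \<and> last (root_path y) = y"
proof -
  obtain xs where "gpath V E xs" "hd xs = r" "last xs = y"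
    using gconnected root_in_V assms unfolding gconnected_def by blast
  then show ?thesis using root_path_eqI by auto
qed

lemma root_path_nonempty: "y \<in> V \<Longrightarrow> root_path y \<noteq> []"
  using root_path_gpath unfolding gpath_def by blast

lemma in_root_path_self: "y \<in> V \<Longrightarrow> y \<in> set (root_path y)"
  using root_path_gpath root_path_nonempty by (metis last_in_set)

lemma root_in_root_path: "y \<in> V \<Longrightarrow> r \<in> set (root_path y)"
  using root_path_gpath root_path_nonempty by (metis hd_in_set)

lemma root_path_subset: "y \<in> V \<Longrightarrow> set (root_path y) \<subseteq> V"
  using root_path_gpath unfolding gpath_def by blast

lemma root_path_root: "root_path r = [r]"
  using root_in_V by (intro root_path_eqI) (simp_all add: gpath_def)

lemma tree_le_iff: "x \<preceq> y \<longleftrightarrow> y \<in> V \<and> x \<in> set (root_path y)"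
proof
  assume "x \<preceq> y"
  then obtain xs where "gpath V E xs" "hd xs = r" "last xs = y" "x \<in> set xs" "y \<in> V"
    unfolding tree_le_def by blast
  then show "y \<in> V \<and> x \<in> set (root_path y)" using root_path_eqI by auto
next
  assume "y \<in> V \<and> x \<in> set (root_path y)"
  then show "x \<preceq> y" unfolding tree_le_def using root_path_gpath root_path_subset by blast
qed

lemma tree_le_in_V: "x \<preceq> y \<Longrightarrow> x \<in> V \<and> y \<in> V"
  unfolding tree_le_def by blast

lemma up_iff: "x \<in> up t \<longleftrightarrow> t \<preceq> x"
  unfolding up_def using tree_le_in_V by blast

lemma up_subset: "up c \<subseteq> V"
  unfolding up_def by blast

lemma root_path_prefix:
  assumes "y \<in> V" "x \<in> set (root_path y)"
  shows "\<exists>q. root_path y = root_path x @ q"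
proof -
  obtain p q where pq: "root_path y = p @ x # q" using assms(2) by (meson split_list)
  have "gpath V E (p @ [x])"
    using gpath_appendD[of V E "p @ [x]" q] root_path_gpath[OF assms(1)] pq by simp
  moreover have "hd (p @ [x]) = r" using root_path_gpath[OF assms(1)] pq by (cases p) auto
  ultimately have "root_path x = p @ [x]" by (intro root_path_eqI) auto
  then show ?thesis using pq by simp
qed

lemma tree_le_refl: "x \<in> V \<Longrightarrow> x \<preceq> x"
  using tree_le_iff in_root_path_self by blast

lemma root_tree_le: "x \<in> V \<Longrightarrow> r \<preceq> x"
  using tree_le_iff root_in_root_path by blast

lemma tree_le_root_path_prefix: "x \<preceq> y \<Longrightarrow> \<exists>q. root_path y = root_path x @ q"
  using root_path_prefix tree_le_iff by blast

lemma tree_le_trans: "x \<preceq> y \<Longrightarrow> y \<preceq> z \<Longrightarrow> x \<preceq> z"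
  using tree_le_root_path_prefix tree_le_iff by (metis Un_iff set_append)

lemma tree_le_antisym:
  assumes "x \<preceq> y" "y \<preceq> x"
  shows "x = y"
proof -
  obtain q1 q2 where "root_path y = root_path x @ q1" "root_path x = root_path y @ q2"
    using assms tree_le_root_path_prefix by blast
  then have "root_path x = root_path y" by simp
  then show ?thesis using root_path_gpath tree_le_in_V assms by metis
qed

lemma tree_le_linear_below:
  assumes "x \<preceq> u" "y \<preceq> u"
  shows "x \<preceq> y \<or> y \<preceq> x"
proof -
  obtain q1 q2 where q: "root_path u = root_path x @ q1" "root_path u = root_path y @ q2"
    using assms tree_le_root_path_prefix by blast
  have V: "x \<in> V" "y \<in> V" using assms tree_le_in_V by auto
  obtain us where "root_path x = root_path y @ us \<or> root_path x @ us = root_path y"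
    using q append_eq_append_conv2[of "root_path x" q1 "root_path y" q2] by auto
  then show ?thesis
    using in_root_path_self[OF V(1)] in_root_path_self[OF V(2)] V tree_le_iff
    by (metis Un_iff set_append)
qed

lemma depth_mono: "x \<preceq> y \<Longrightarrow> depth x \<le> depth y"
  unfolding depth_def by (metis tree_le_root_path_prefix le_add1 length_append)

lemma tree_le_depth_eq:
  assumes "x \<preceq> y" "depth x = depth y"
  shows "x = y"
proof -
  obtain q where "root_path y = root_path x @ q" using assms(1) tree_le_root_path_prefix by blast
  then have "root_path y = root_path x" using assms(2) unfolding depth_def by simp
  then show ?thesis using root_path_gpath tree_le_in_V assms by metis
qed

lemma depth_pos: "x \<in> V \<Longrightarrow> depth x \<noteq> 0"
  using root_path_nonempty unfolding depth_def by simp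

lemma root_path_snoc_eqI:
  assumes "x \<in> V" "(x, y) \<in> E" "y \<notin> set (root_path x)"
  shows "root_path y = root_path x @ [y]"
proof (rule root_path_eqI)
  show "gpath V E (root_path x @ [y])"
    using gpath_snoc root_path_gpath[OF assms(1)] assms(2,3) edge_in_V by metis
  show "hd (root_path x @ [y]) = r" using root_path_gpath[OF assms(1)] root_path_nonempty[OF assms(1)] by simp
qed simp

lemma root_path_edge:
  assumes "(x, y) \<in> E"
  shows "root_path y = root_path x @ [y] \<or> root_path x = root_path y @ [x]"
proof -
  have V: "x \<in> V" "y \<in> V" using edge_in_V assms by auto
  have "x \<notin> set (root_path y)" if "y \<in> set (root_path x)"
  proof
    assume "x \<in> set (root_path y)"
    then have "x = y" using that tree_le_antisym tree_le_iff V by blast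
    then show False using assms edge_irrefl by simp
  qed
  then show ?thesis using root_path_snoc_eqI V assms edge_sym by blast
qed

lemma exists_child_below:
  assumes "t \<preceq> u" "t \<noteq> u"
  shows "\<exists>c\<in>V. root_path c = root_path t @ [c] \<and> c \<preceq> u"
proof -
  have uV: "u \<in> V" and tV: "t \<in> V" using assms tree_le_in_V by auto
  obtain q where q: "root_path u = root_path t @ q" using assms(1) tree_le_root_path_prefix by blast
  have "q \<noteq> []" using q assms root_path_gpath uV tV by (metis append_Nil2)
  then obtain c q' where cq: "q = c # q'" by (cases q) auto
  have g: "gpath V E (root_path t @ [c])"
    using gpath_appendD[of V E "root_path t @ [c]" q'] root_path_gpath[OF uV] q cq by simp
  have "root_path c = root_path t @ [c]"
    using root_path_gpath[OF tV] root_path_nonempty[OF tV] by (intro root_path_eqI[OF g]) simp_all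
  moreover have "c \<in> V" using g unfolding gpath_def by auto
  moreover have "c \<preceq> u" using tree_le_iff uV q cq by auto
  ultimately show ?thesis by blast
qed

lemma child_props:
  assumes "root_path c = root_path t @ [c]" "c \<in> V" "t \<in> V"
  shows "t \<preceq> c" "depth c = Suc (depth t)" "(t, c) \<in> E"
    "tree_down_strict V E r c = set (root_path t)"
proof -
  show "t \<preceq> c" using in_root_path_self[OF assms(3)] assms(1,2) tree_le_iff by simp
  show "depth c = Suc (depth t)" unfolding depth_def assms(1) by simp
  have "successively (\<lambda>x y. (x, y) \<in> E) (root_path t @ [c])"
    using root_path_gpath[OF assms(2)] unfolding gpath_iff_successively assms(1) by blast
  then show "(t, c) \<in> E"
    using root_path_gpath[OF assms(3)] root_path_nonempty[OF assms(3)] by (simp add: successively_append_iff)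
  have "c \<notin> set (root_path t)" using root_path_gpath[OF assms(2)] unfolding assms(1) gpath_def by simp
  then show "tree_down_strict V E r c = set (root_path t)"
    unfolding tree_down_strict_def tree_down_def using tree_le_iff assms root_path_subset by auto
qed

lemma exists_parent:
  assumes "x \<in> V" "x \<noteq> r"
  shows "\<exists>p\<in>V. root_path x = root_path p @ [x]"
proof -
  define b where "b = butlast (root_path x)"
  have px: "root_path x = b @ [x]"
    unfolding b_def using root_path_gpath[OF assms(1)] root_path_nonempty[OF assms(1)]
    by (metis append_butlast_last_id)
  have "b \<noteq> []" using px root_path_gpath[OF assms(1)] assms(2) by auto
  then have g: "gpath V E b" using gpath_appendD[of V E b "[x]"] root_path_gpath[OF assms(1)] px by simp
  moreover have "hd b = r" using root_path_gpath[OF assms(1)] px \<open>b \<noteq> []\<close> by simp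
  ultimately have "root_path (last b) = b" using root_path_eqI by blast
  moreover have "last b \<in> V" using g \<open>b \<noteq> []\<close> unfolding gpath_def by auto
  ultimately show ?thesis using px by metis
qed

lemma tree_down_strict_iff: "y \<in> tree_down_strict V E r c \<longleftrightarrow> y \<preceq> c \<and> y \<noteq> c"
  unfolding tree_down_strict_def tree_down_def using tree_le_in_V by blast

lemma up_edge_closed:
  assumes "c \<preceq> x" "(x, y) \<in> E" "y \<notin> tree_down_strict V E r c"
  shows "c \<preceq> y"
proof -
  have V: "x \<in> V" "y \<in> V" using edge_in_V assms(2) by auto
  from root_path_edge[OF assms(2)] show ?thesis
  proof
    assume "root_path y = root_path x @ [y]"
    then have "x \<preceq> y" using in_root_path_self[OF V(1)] tree_le_iff V by simp
    then show ?thesis using tree_le_trans assms(1) by blast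
  next
    assume "root_path x = root_path y @ [x]"
    then have "y \<preceq> x" using in_root_path_self[OF V(2)] tree_le_iff V by simp
    then show ?thesis using tree_le_linear_below assms(1,3) tree_down_strict_iff by blast
  qed
qed

lemma up_path_closed:
  "successively (\<lambda>x y. (x, y) \<in> E) xs \<Longrightarrow> set xs \<inter> tree_down_strict V E r c = {} \<Longrightarrow>
    xs \<noteq> [] \<Longrightarrow> c \<preceq> hd xs \<Longrightarrow> \<forall>x\<in>set xs. c \<preceq> x"
proof (induction xs)
  case Nil
  then show ?case by simp
next
  case (Cons a xs)
  show ?case
  proof (cases "xs = []")
    case True
    then show ?thesis using Cons.prems by simp
  next
    case False
    have e: "(a, hd xs) \<in> E" and s: "successively (\<lambda>x y. (x, y) \<in> E) xs"
      using Cons.prems(1) False by (auto simp: successively_Cons)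
    have "hd xs \<notin> tree_down_strict V E r c" using Cons.prems(2) False hd_in_set by fastforce
    then have "c \<preceq> hd xs" using up_edge_closed[OF _ e] Cons.prems(4) by simp
    then show ?thesis using Cons.IH[OF s _ False] Cons.prems(2,4) by auto
  qed
qed

lemma up_rtrancl: "c \<preceq> x \<Longrightarrow> (c, x) \<in> (E \<inter> up c \<times> up c)\<^sup>*"
proof (induction "depth x" arbitrary: x rule: less_induct)
  case less
  show ?case
  proof (cases "x = c")
    case False
    have xV: "x \<in> V" using less.prems tree_le_in_V by blast
    have cx: "c \<in> set (root_path x)" using less.prems tree_le_iff by blast
    have "x \<noteq> r" using cx False root_path_root by auto
    then obtain p where p: "p \<in> V" "root_path x = root_path p @ [x]" using exists_parent[OF xV] by blast
    have cp: "c \<preceq> p" using cx p False tree_le_iff by simp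
    have "depth x = Suc (depth p)" using child_props(2)[OF p(2) xV p(1)] .
    then have "(c, p) \<in> (E \<inter> up c \<times> up c)\<^sup>*" using less.hyps cp by simp
    moreover have "(p, x) \<in> E \<inter> up c \<times> up c"
      using child_props(3)[OF p(2) xV p(1)] cp less.prems up_iff by blast
    ultimately show ?thesis by (rule rtrancl_into_rtrancl)
  qed simp
qed

subsection \<open>Rooted rays and trunks\<close>

definition rooted_ray :: "(nat \<Rightarrow> 'a) \<Rightarrow> bool" where
  "rooted_ray Q \<longleftrightarrow> is_ray V E Q \<and> Q 0 = r"

lemma rooted_ray_in_V: "rooted_ray Q \<Longrightarrow> Q n \<in> V"
  unfolding rooted_ray_def is_ray_def by blast

lemma root_path_rooted_ray:
  assumes "rooted_ray Q"
  shows "root_path (Q n) = map Q [0..<Suc n]"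
proof (induction n)
  case 0
  then show ?case using assms root_path_root unfolding rooted_ray_def by simp
next
  case (Suc n)
  have ray: "inj Q" "\<And>n. Q n \<in> V" "\<And>n. (Q n, Q (Suc n)) \<in> E"
    using assms unfolding rooted_ray_def is_ray_def by auto
  have "Q (Suc n) \<notin> set (root_path (Q n))"
    using ray(1) unfolding Suc.IH by (auto simp: inj_eq)
  then show ?case using root_path_snoc_eqI[OF ray(2) ray(3)] Suc.IH by simp
qed

lemma set_root_path_rooted_ray:
  assumes "rooted_ray Q"
  shows "set (root_path (Q n)) = Q ` {..n}"
proof -
  have "{0..<Suc n} = {..n}" by auto
  then show ?thesis unfolding root_path_rooted_ray[OF assms] set_map set_upt by simp
qed

lemma tree_down_strict_rooted_ray:
  assumes "rooted_ray Q"
  shows "tree_down_strict V E r (Q (Suc i)) = set (root_path (Q i))"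
proof -
  have "root_path (Q (Suc i)) = root_path (Q i) @ [Q (Suc i)]"
    using root_path_rooted_ray[OF assms] by simp
  from child_props(4)[OF this rooted_ray_in_V[OF assms] rooted_ray_in_V[OF assms]] show ?thesis .
qed

lemma depth_rooted_ray: "rooted_ray Q \<Longrightarrow> depth (Q n) = Suc n"
  unfolding depth_def using root_path_rooted_ray by simp

lemma rooted_ray_tree_le_iff:
  assumes "rooted_ray Q"
  shows "Q i \<preceq> Q j \<longleftrightarrow> i \<le> j"
  using assms rooted_ray_in_V unfolding tree_le_iff set_root_path_rooted_ray[OF assms]
  by (auto simp: rooted_ray_def is_ray_def inj_eq)

lemma rooted_ray_eqI:
  assumes "rooted_ray Q" "rooted_ray Q'" "range Q' \<subseteq> range Q"
  shows "Q' = Q"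
proof
  fix j
  obtain k where k: "Q' j = Q k" using assms(3) by blast
  then have "j = k" using depth_rooted_ray[OF assms(2), of j] depth_rooted_ray[OF assms(1), of k] by simp
  then show "Q' j = Q j" using k by simp
qed

lemma up_rooted_ray_avoids:
  assumes "rooted_ray Q" "finite X"
  shows "\<exists>n. up (Q n) \<inter> X = {}"
proof -
  define n where "n = Max (insert 0 (depth ` X))"
  have "x \<notin> up (Q n)" if "x \<in> X" for x
  proof
    assume "x \<in> up (Q n)"
    then have "depth (Q n) \<le> depth x" using depth_mono up_iff by blast
    moreover have "depth x \<le> n" unfolding n_def using assms(2) that by simp
    ultimately show False using depth_rooted_ray[OF assms(1), of n] by simp
  qed
  then show ?thesis by blast
qed

lemma up_disjoint_same_depth:
  assumes "depth c = depth c'" "c \<noteq> c'"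
  shows "up c \<inter> up c' = {}"
proof (rule ccontr)
  assume "up c \<inter> up c' \<noteq> {}"
  then obtain x where "x \<in> up c" "x \<in> up c'" by blast
  then have "c \<preceq> x" "c' \<preceq> x" unfolding up_iff by auto
  then have "c \<preceq> c' \<or> c' \<preceq> c" using tree_le_linear_below by blast
  then show False using tree_le_depth_eq assms by metis
qed

lemma rooted_rays_branch:
  assumes Q: "rooted_ray Q" and Q': "rooted_ray Q'" and "Q \<noteq> Q'"
  shows "\<exists>c\<in>range Q. \<exists>c'\<in>range Q'. up c \<inter> up c' = {} \<and>
     tree_down_strict V E r c = tree_down_strict V E r c' \<and> finite (tree_down_strict V E r c)"
proof -
  have ex: "\<exists>j. Q j \<noteq> Q' j" using assms(3) by auto
  define j where "j = (LEAST j. Q j \<noteq> Q' j)"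
  have j: "Q j \<noteq> Q' j" unfolding j_def using LeastI_ex[OF ex] .
  have "j \<noteq> 0"
  proof
    assume "j = 0"
    then show False using j Q Q' unfolding rooted_ray_def by simp
  qed
  then obtain i where i: "j = Suc i" using not0_implies_Suc by blast
  have "Q i = Q' i" using not_less_Least[of i "\<lambda>j. Q j \<noteq> Q' j"] i unfolding j_def by simp
  then have same_down: "tree_down_strict V E r (Q j) = tree_down_strict V E r (Q' j)"
    using tree_down_strict_rooted_ray Q Q' i by simp
  have "finite (tree_down_strict V E r (Q j))"
    using tree_down_strict_rooted_ray[OF Q] i by simp
  moreover have "up (Q j) \<inter> up (Q' j) = {}"
    using up_disjoint_same_depth j depth_rooted_ray[OF Q] depth_rooted_ray[OF Q'] by simp
  ultimately show ?thesis using same_down by blast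
qed

definition trunk :: "'a set \<Rightarrow> 'a set" where
  "trunk Y = {t \<in> V. finite (Y - up t)}"

lemma trunk_iff: "t \<in> trunk Y \<longleftrightarrow> t \<in> V \<and> finite (Y - up t)"
  unfolding trunk_def by blast

lemma root_in_trunk:
  assumes "Y \<subseteq> V"
  shows "r \<in> trunk Y"
proof -
  have "Y - up r = {}" using assms root_tree_le up_iff by blast
  then show ?thesis using root_in_V unfolding trunk_iff by (metis finite.emptyI)
qed

lemma trunk_linear:
  assumes "infinite Y" "t \<in> trunk Y" "t' \<in> trunk Y"
  shows "t \<preceq> t' \<or> t' \<preceq> t"
proof -
  obtain x where "x \<in> up t" "x \<in> up t'"
    using cofinite_subsets_meet[OF assms(1)] assms(2,3) unfolding trunk_iff by blast
  then show ?thesis using tree_le_linear_below up_iff by blast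
qed

lemma rooted_ray_through_children:
  assumes "r \<in> T" "T \<subseteq> V" and children: "\<And>t. t \<in> T \<Longrightarrow> \<exists>c\<in>T. root_path c = root_path t @ [c]"
  shows "\<exists>Q. rooted_ray Q \<and> range Q \<subseteq> T"
proof -
  define next_child where "next_child t = (SOME c. c \<in> T \<and> root_path c = root_path t @ [c])" for t
  have next_child: "next_child t \<in> T \<and> root_path (next_child t) = root_path t @ [next_child t]"
    if "t \<in> T" for t
    using children[OF that] someI_ex unfolding next_child_def by (metis (mono_tags, lifting))
  define Q where "Q n = (next_child ^^ n) r" for n
  have QT: "Q n \<in> T" for n
    by (induction n) (use assms(1) next_child in \<open>simp_all add: Q_def\<close>)
  have QV: "Q n \<in> V" for n using QT assms(2) by blast
  have QP: "root_path (Q (Suc n)) = root_path (Q n) @ [Q (Suc n)]" for n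
    using next_child[OF QT[of n]] by (simp add: Q_def)
  have depth_Q: "depth (Q n) = Suc n" for n
  proof (induction n)
    case 0
    then show ?case by (simp add: Q_def depth_def root_path_root)
  next
    case (Suc n)
    then show ?case using child_props(2)[OF QP QV QV] by simp
  qed
  have "inj Q" by (rule injI) (metis depth_Q nat.inject)
  then have "rooted_ray Q"
    using QV child_props(3)[OF QP QV QV] unfolding rooted_ray_def is_ray_def by (simp add: Q_def)
  then show ?thesis using QT by blast
qed

lemma trunk_eq_rooted_ray:
  assumes "infinite Y" "Y \<subseteq> V"
    and children: "\<And>t. t \<in> trunk Y \<Longrightarrow> \<exists>c\<in>trunk Y. root_path c = root_path t @ [c]"
  shows "\<exists>Q. rooted_ray Q \<and> trunk Y = range Q"
proof -
  obtain Q where Q: "rooted_ray Q" "range Q \<subseteq> trunk Y"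
    using rooted_ray_through_children[OF root_in_trunk[OF assms(2)] _ children] trunk_iff by blast
  have "t \<in> range Q" if t: "t \<in> trunk Y" for t
  proof -
    obtain d where d: "depth t = Suc d" using depth_pos t trunk_iff not0_implies_Suc by blast
    have "t \<preceq> Q d \<or> Q d \<preceq> t" using trunk_linear[OF assms(1) t] Q(2) by blast
    moreover have "depth t = depth (Q d)" using d depth_rooted_ray[OF Q(1)] by simp
    ultimately have "t = Q d" using tree_le_depth_eq by metis
    then show ?thesis by simp
  qed
  then show ?thesis using Q by blast
qed

lemma ray_infinite: "is_ray V E R \<Longrightarrow> infinite (range R)"
  using finite_imageD infinite_UNIV_nat unfolding is_ray_def by blast

lemma trunk_rooted_ray:
  assumes Q: "rooted_ray Q"
  shows "trunk (range Q) = range Q"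
proof
  show "range Q \<subseteq> trunk (range Q)"
  proof
    fix x assume "x \<in> range Q"
    then obtain j where x: "x = Q j" by blast
    have "range Q - up (Q j) \<subseteq> Q ` {..<j}"
    proof
      fix y assume "y \<in> range Q - up (Q j)"
      then obtain i where "y = Q i" "\<not> Q j \<preceq> Q i" using up_iff by blast
      then show "y \<in> Q ` {..<j}" using rooted_ray_tree_le_iff[OF Q] by auto
    qed
    then have "finite (range Q - up (Q j))" using finite_subset by blast
    then show "x \<in> trunk (range Q)" using rooted_ray_in_V[OF Q] x trunk_iff by blast
  qed
next
  show "trunk (range Q) \<subseteq> range Q"
  proof
    fix t assume t: "t \<in> trunk (range Q)"
    have "range Q \<inter> up t \<noteq> {}"
    proof
      assume "range Q \<inter> up t = {}"
      then have "range Q - up t = range Q" by blast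
      then show False using t ray_infinite Q unfolding trunk_iff rooted_ray_def by auto
    qed
    then obtain i where "t \<preceq> Q i" using up_iff by blast
    then show "t \<in> range Q" using tree_le_iff set_root_path_rooted_ray[OF Q] by auto
  qed
qed

lemma ray_eventually_in:
  assumes "is_ray V E R" "finite (range R - A)"
  shows "\<exists>m. \<forall>k\<ge>m. R k \<in> A"
proof -
  have "inj R" using assms(1) unfolding is_ray_def by blast
  then have "finite (R -` (range R - A))" using assms(2) finite_vimageI by blast
  moreover have "R -` (range R - A) = {k. R k \<notin> A}" by auto
  ultimately obtain m where "\<forall>k\<in>{k. R k \<notin> A}. k < m"
    using finite_nat_set_iff_bounded by auto
  then show ?thesis by (metis mem_Collect_eq not_le)
qed

lemma ray_tree_le_forward:
  assumes "is_ray V E R" "\<And>k. k \<ge> m \<Longrightarrow> R k \<notin> tree_down_strict V E r c" "c \<preceq> R m"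
  shows "c \<preceq> R (m + d)"
proof (induction d)
  case (Suc d)
  have "(R (m + d), R (Suc (m + d))) \<in> E" using assms(1) unfolding is_ray_def by blast
  moreover have "R (Suc (m + d)) \<notin> tree_down_strict V E r c" using assms(2) by simp
  ultimately show ?case using up_edge_closed[OF Suc.IH] by simp
qed (use assms(3) in simp)

lemma ray_tree_le_backward:
  assumes "is_ray V E R" "\<And>k. k \<ge> m \<Longrightarrow> R k \<notin> tree_down_strict V E r c"
  shows "c \<preceq> R (i + d) \<Longrightarrow> m \<le> i \<Longrightarrow> c \<preceq> R i"
proof (induction d arbitrary: i)
  case (Suc d)
  then have "c \<preceq> R (Suc i)" by simp
  moreover have "(R (Suc i), R i) \<in> E" using assms(1) edge_sym unfolding is_ray_def by blast
  ultimately show ?case using up_edge_closed assms(2) Suc.prems(2) by blast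
qed simp

lemma ray_trunk_child:
  assumes R: "is_ray V E R" and t: "t \<in> trunk (range R)"
  shows "\<exists>c\<in>trunk (range R). root_path c = root_path t @ [c]"
proof -
  have tV: "t \<in> V" using t trunk_iff by blast
  define X where "X = set (root_path t)"
  have "range R - (up t - X) \<subseteq> (range R - up t) \<union> X" by blast
  then have "finite (range R - (up t - X))"
    using t finite_subset unfolding trunk_iff X_def by blast
  then obtain m where m: "\<And>k. k \<ge> m \<Longrightarrow> R k \<in> up t - X" using ray_eventually_in[OF R] by blast
  have "R m \<noteq> t" using m[of m] in_root_path_self[OF tV] unfolding X_def by blast
  moreover have "t \<preceq> R m" using m[of m] up_iff by blast
  ultimately obtain c where c: "c \<in> V" "root_path c = root_path t @ [c]" "c \<preceq> R m"
    using exists_child_below by blast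
  have down: "tree_down_strict V E r c = X" unfolding X_def using child_props(4)[OF c(2) c(1) tV] .
  have "range R - up c \<subseteq> R ` {..<m}"
  proof
    fix x assume x: "x \<in> range R - up c"
    then obtain k where k: "x = R k" by blast
    have "\<not> m \<le> k"
    proof
      assume "m \<le> k"
      then have "c \<preceq> R k"
        using ray_tree_le_forward[OF R _ c(3), of "k - m"] m down by auto
      then show False using x k up_iff by simp
    qed
    then show "x \<in> R ` {..<m}" using k by simp
  qed
  then have "c \<in> trunk (range R)" using finite_subset c(1) trunk_iff by blast
  then show ?thesis using c by blast
qed

lemma trunk_ray:
  assumes "is_ray V E R"
  shows "\<exists>Q. rooted_ray Q \<and> trunk (range R) = range Q"
proof (rule trunk_eq_rooted_ray)
  show "infinite (range R)" using ray_infinite[OF assms] .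
  show "range R \<subseteq> V" using assms unfolding is_ray_def by blast
qed (rule ray_trunk_child[OF assms])

lemma trunks_of_rays: "(\<lambda>R. trunk (range R)) ` {R. is_ray V E R} = {range Q | Q. rooted_ray Q}"
proof
  show "(\<lambda>R. trunk (range R)) ` {R. is_ray V E R} \<subseteq> {range Q | Q. rooted_ray Q}"
    using trunk_ray by blast
  show "{range Q | Q. rooted_ray Q} \<subseteq> (\<lambda>R. trunk (range R)) ` {R. is_ray V E R}"
  proof
    fix T assume "T \<in> {range Q | Q. rooted_ray Q}"
    then obtain Q where "rooted_ray Q" "T = range Q" by blast
    then show "T \<in> (\<lambda>R. trunk (range R)) ` {R. is_ray V E R}"
      using trunk_rooted_ray unfolding rooted_ray_def by (intro image_eqI[of _ _ Q]) auto
  qed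
qed

lemma ray_equiv_imp_trunk_eq:
  assumes R: "is_ray V E R" and R': "is_ray V E R'" and equiv: "ray_equiv V E R R'"
  shows "trunk (range R) = trunk (range R')"
proof (rule ccontr)
  assume ne: "trunk (range R) \<noteq> trunk (range R')"
  obtain Q where Q: "rooted_ray Q" "trunk (range R) = range Q" using trunk_ray[OF R] by blast
  obtain Q' where Q': "rooted_ray Q'" "trunk (range R') = range Q'" using trunk_ray[OF R'] by blast
  obtain c c' where c: "c \<in> range Q" "c' \<in> range Q'" "up c \<inter> up c' = {}"
    "tree_down_strict V E r c = tree_down_strict V E r c'" "finite (tree_down_strict V E r c)"
  proof -
    have "Q \<noteq> Q'" using ne Q(2) Q'(2) by auto
    then show ?thesis using that rooted_rays_branch[OF Q(1) Q'(1)] by blast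
  qed
  define X where "X = tree_down_strict V E r c"
  obtain m n xs where mn: "\<forall>k\<ge>m. R k \<notin> X" "\<forall>k\<ge>n. R' k \<notin> X"
    "gpath (V - X) (E \<inter> ((V - X) \<times> (V - X))) xs" "hd xs = R m" "last xs = R' n"
    using equiv[unfolded ray_equiv_def, rule_format, OF c(5)] unfolding X_def by blast
  have trunk: "c \<in> trunk (range R)" "c' \<in> trunk (range R')" using c Q Q' by auto
  obtain m1 where "\<And>k. k \<ge> m1 \<Longrightarrow> R k \<in> up c"
    using ray_eventually_in[OF R] trunk(1) trunk_iff by blast
  then have "c \<preceq> R (m + m1)" using up_iff by simp
  then have Rm: "c \<preceq> R m" using ray_tree_le_backward[OF R, of m c m m1] mn(1) X_def by blast
  obtain n1 where "\<And>k. k \<ge> n1 \<Longrightarrow> R' k \<in> up c'"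
    using ray_eventually_in[OF R'] trunk(2) trunk_iff by blast
  then have "c' \<preceq> R' (n + n1)" using up_iff by simp
  then have R'n: "c' \<preceq> R' n" using ray_tree_le_backward[OF R', of n c' n n1] mn(2) c(4) X_def by blast
  have xs: "xs \<noteq> []" "set xs \<subseteq> V - X" "successively (\<lambda>x y. (x, y) \<in> E) xs"
    using mn(3) unfolding gpath_iff_successively by (auto elim: successively_mono)
  moreover have "set xs \<inter> tree_down_strict V E r c = {}" using xs(2) X_def by blast
  ultimately have "\<forall>x\<in>set xs. c \<preceq> x" using up_path_closed[of xs c] Rm mn(4) by simp
  then have "c \<preceq> R' n" using last_in_set[OF xs(1)] mn(5) by simp
  then show False using R'n c(3) up_iff by blast
qed

lemma trunk_eq_imp_ray_equiv:
  assumes R: "is_ray V E R" and R': "is_ray V E R'" and eq: "trunk (range R) = trunk (range R')"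
  shows "ray_equiv V E R R'"
  unfolding ray_equiv_def
proof (intro allI impI)
  fix X :: "'a set"
  assume X: "finite X"
  obtain Q where Q: "rooted_ray Q" "trunk (range R) = range Q" using trunk_ray[OF R] by blast
  obtain k where cX: "up (Q k) \<inter> X = {}" using up_rooted_ray_avoids[OF Q(1) X] by blast
  define c where "c = Q k"
  have "c \<in> trunk (range R)" "c \<in> trunk (range R')" using Q eq unfolding c_def by auto
  then obtain m n where m: "\<And>k. k \<ge> m \<Longrightarrow> R k \<in> up c" and n: "\<And>k. k \<ge> n \<Longrightarrow> R' k \<in> up c"
    using ray_eventually_in[OF R] ray_eventually_in[OF R'] unfolding trunk_iff by blast
  define E' where "E' = E \<inter> up c \<times> up c"
  have "sym E'" unfolding E'_def sym_def using edge_sym by blast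
  have "(c, R m) \<in> E'\<^sup>*" "(c, R' n) \<in> E'\<^sup>*"
    unfolding E'_def using up_rtrancl m[of m] n[of n] up_iff by auto
  then have "(R m, c) \<in> E'\<^sup>*" "(c, R' n) \<in> E'\<^sup>*"
    using sym_rtrancl[OF \<open>sym E'\<close>] by (auto dest: symD)
  then have "(R m, R' n) \<in> E'\<^sup>*" by (rule rtrancl_trans)
  moreover have "R m \<in> up c" using m by simp
  moreover have "E' \<subseteq> up c \<times> up c" unfolding E'_def by blast
  ultimately have "\<exists>xs. gpath (up c) E' xs \<and> hd xs = R m \<and> last xs = R' n"
    by (rule rtrancl_gpath)
  then obtain xs where xs: "gpath (up c) E' xs" "hd xs = R m" "last xs = R' n" by blast
  have "set xs \<subseteq> up c" using xs(1) by (simp add: gpath_def)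
  then have "set xs \<subseteq> V - X" using up_subset cX unfolding c_def by blast
  then have "gpath (V - X) (E \<inter> ((V - X) \<times> (V - X))) xs"
    by (rule gpath_mono[OF xs(1)]) (unfold E'_def, blast)
  moreover have "\<forall>k\<ge>m. R k \<notin> X" "\<forall>k\<ge>n. R' k \<notin> X" using m n cX c_def by blast+
  ultimately show "\<exists>m n xs. (\<forall>k\<ge>m. R k \<notin> X) \<and> (\<forall>k\<ge>n. R' k \<notin> X) \<and>
      gpath (V - X) (E \<inter> ((V - X) \<times> (V - X))) xs \<and> hd xs = R m \<and> last xs = R' n"
    using xs by blast
qed

lemma ray_equiv_iff_trunk_eq:
  "is_ray V E R \<Longrightarrow> is_ray V E R' \<Longrightarrow> ray_equiv V E R R' \<longleftrightarrow> trunk (range R) = trunk (range R')"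
  using ray_equiv_imp_trunk_eq trunk_eq_imp_ray_equiv by blast

end

section \<open>Connectoids and necklaces\<close>

lemma cn_connected_subset: "cn_connected S F C \<Longrightarrow> C \<subseteq> S"
  unfolding cn_connected_def by blast

lemma cn_componentsD: "K \<in> cn_components S F A \<Longrightarrow> cn_connected S F K \<and> K \<subseteq> A"
  unfolding cn_components_def by blast

lemma necklace_chain:
  assumes "necklace S F N"
  obtains H :: "nat \<Rightarrow> 'a set"
  where "\<And>n. finite (H n)" "\<And>n. cn_connected S F (H n)" "N = (\<Union>n. H n)"
    "\<And>i j. H i \<inter> H j \<noteq> {} \<longleftrightarrow> i \<le> j + 1 \<and> j \<le> i + 1"
proof -
  obtain H :: "nat \<Rightarrow> 'a set" where "\<forall>n. finite (H n) \<and> cn_connected S F (H n)" "N = (\<Union>n. H n)"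
    "\<forall>i j. H i \<inter> H j \<noteq> {} \<longleftrightarrow> i \<le> j + 1 \<and> j \<le> i + 1"
    using assms unfolding necklace_def by blast
  then show ?thesis by (intro that[of H]) blast+
qed

lemma necklace_subset: "necklace S F N \<Longrightarrow> N \<subseteq> S"
  unfolding necklace_def using cn_connected_subset by blast

lemma necklace_infinite:
  assumes "necklace S F N"
  shows "infinite N"
proof -
  obtain H :: "nat \<Rightarrow> 'a set" where H: "N = (\<Union>n. H n)"
    and meet: "\<And>i j. H i \<inter> H j \<noteq> {} \<longleftrightarrow> i \<le> j + 1 \<and> j \<le> i + 1"
    using necklace_chain[OF assms] by metis
  have "H i \<noteq> {}" for i using meet[of i i] by auto
  define f where "f i = (SOME x. x \<in> H (2 * i))" for i
  have f: "f i \<in> H (2 * i)" for i unfolding f_def using \<open>\<And>i. H i \<noteq> {}\<close> by (simp add: some_in_eq)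
  text \<open>Beads two steps apart are disjoint, so \<open>f\<close> is injective.\<close>
  have "inj f"
  proof (rule injI)
    fix i j assume "f i = f j"
    then have "H (2 * i) \<inter> H (2 * j) \<noteq> {}" using f[of i] f[of j] by auto
    then show "i = j" using meet by simp
  qed
  moreover have "range f \<subseteq> N" using f H by blast
  ultimately show ?thesis using infinite_iff_countable_subset by blast
qed

lemma beads_eventually_avoid:
  fixes H :: "nat \<Rightarrow> 'a set"
  assumes meet: "\<And>i j. H i \<inter> H j \<noteq> {} \<longleftrightarrow> i \<le> j + 1 \<and> j \<le> i + 1" and X: "finite X"
  shows "\<exists>n0. \<forall>i\<ge>n0. H i \<inter> X = {}"
proof -
  have beads_of: "finite {i. x \<in> H i}" for x
  proof (cases "\<exists>i0. x \<in> H i0")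
    case True
    then obtain i0 where "x \<in> H i0" by blast
    have "{i. x \<in> H i} \<subseteq> {..Suc i0}"
    proof
      fix i assume "i \<in> {i. x \<in> H i}"
      then have "H i \<inter> H i0 \<noteq> {}" using \<open>x \<in> H i0\<close> by blast
      then show "i \<in> {..Suc i0}" using meet by simp
    qed
    then show ?thesis using finite_subset by blast
  qed simp
  have "{i. H i \<inter> X \<noteq> {}} = (\<Union>x\<in>X. {i. x \<in> H i})" by blast
  then have "finite {i. H i \<inter> X \<noteq> {}}" using beads_of X by simp
  then obtain n0 where n0: "\<forall>i\<in>{i. H i \<inter> X \<noteq> {}}. i < n0"
    using finite_nat_set_iff_bounded by blast
  then have "\<forall>i\<ge>n0. H i \<inter> X = {}" by force
  then show ?thesis by blast
qed

locale connectoid_space =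
  fixes S :: "'a set" and F :: "'a set set"
  assumes connectoid: "connectoid S F"
begin

lemma cn_connected_singleton: "s \<in> S \<Longrightarrow> cn_connected S F {s}"
  using connectoid unfolding cn_connected_def connectoid_def by blast

lemma cn_connected_Un:
  assumes "cn_connected S F C1" "cn_connected S F C2" "C1 \<inter> C2 \<noteq> {}"
  shows "cn_connected S F (C1 \<union> C2)"
proof -
  obtain p where p: "p \<in> C1" "p \<in> C2" using assms(3) by blast
  have to_p: "\<exists>G\<in>F. G \<subseteq> C1 \<union> C2 \<and> x \<in> G \<and> p \<in> G" if x: "x \<in> C1 \<union> C2" for x
  proof -
    obtain C where C: "cn_connected S F C" "C \<subseteq> C1 \<union> C2" "x \<in> C" "p \<in> C"
      using x p assms(1,2) by blast
    then obtain G where "G \<in> F" "G \<subseteq> C" "x \<in> G" "p \<in> G" unfolding cn_connected_def by blast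
    then show ?thesis using C(2) by blast
  qed
  have "\<exists>G\<in>F. G \<subseteq> C1 \<union> C2 \<and> x \<in> G \<and> y \<in> G"
    if xy: "x \<in> C1 \<union> C2" "y \<in> C1 \<union> C2" for x y
  proof -
    obtain G1 where G1: "G1 \<in> F" "G1 \<subseteq> C1 \<union> C2" "x \<in> G1" "p \<in> G1"
      using to_p[OF xy(1)] by blast
    obtain G2 where G2: "G2 \<in> F" "G2 \<subseteq> C1 \<union> C2" "y \<in> G2" "p \<in> G2"
      using to_p[OF xy(2)] by blast
    note G = G1 G2
    then have "G1 \<union> G2 \<in> F" using connectoid unfolding connectoid_def by blast
    then show ?thesis using G by (intro bexI[of _ "G1 \<union> G2"]) auto
  qed
  moreover have "C1 \<union> C2 \<subseteq> S" using assms(1,2) cn_connected_subset by blast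
  ultimately show ?thesis unfolding cn_connected_def by blast
qed

definition component_of :: "'a set \<Rightarrow> 'a \<Rightarrow> 'a set" where
  "component_of A p = \<Union>{C. cn_connected S F C \<and> C \<subseteq> A \<and> p \<in> C}"

lemma subset_component_of: "cn_connected S F C \<Longrightarrow> C \<subseteq> A \<Longrightarrow> p \<in> C \<Longrightarrow> C \<subseteq> component_of A p"
  unfolding component_of_def by blast

lemma cn_connected_component_of:
  assumes "A \<subseteq> S"
  shows "cn_connected S F (component_of A p)"
proof -
  have "\<exists>G\<in>F. G \<subseteq> component_of A p \<and> x \<in> G \<and> y \<in> G"
    if xy: "x \<in> component_of A p" "y \<in> component_of A p" for x y
  proof -
    obtain C1 where C1: "cn_connected S F C1" "C1 \<subseteq> A" "p \<in> C1" "x \<in> C1"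
      using xy(1) unfolding component_of_def by blast
    obtain C2 where C2: "cn_connected S F C2" "C2 \<subseteq> A" "p \<in> C2" "y \<in> C2"
      using xy(2) unfolding component_of_def by blast
    note C = C1 C2
    then have "cn_connected S F (C1 \<union> C2)" using cn_connected_Un by blast
    then obtain G where "G \<in> F" "G \<subseteq> C1 \<union> C2" "x \<in> G" "y \<in> G"
      using C unfolding cn_connected_def by blast
    moreover have "C1 \<union> C2 \<subseteq> component_of A p" using C unfolding component_of_def by blast
    ultimately show ?thesis by blast
  qed
  moreover have "component_of A p \<subseteq> S" using assms unfolding component_of_def by blast
  ultimately show ?thesis unfolding cn_connected_def by blast
qed

lemma component_of_in_components:
  assumes "p \<in> A" "A \<subseteq> S"
  shows "component_of A p \<in> cn_components S F A"
proof -
  have p: "p \<in> component_of A p"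
    using subset_component_of[OF cn_connected_singleton] assms by blast
  have "K = component_of A p"
    if "component_of A p \<subseteq> K" "K \<subseteq> A" "cn_connected S F K" for K
    using that p subset_component_of[of K A p] by blast
  moreover have "component_of A p \<subseteq> A" unfolding component_of_def by blast
  ultimately show ?thesis
    using cn_connected_component_of[OF assms(2)] unfolding cn_components_def by blast
qed

lemma cn_components_absorb:
  assumes "K \<in> cn_components S F A" "cn_connected S F C" "C \<subseteq> A" "C \<inter> K \<noteq> {}"
  shows "C \<subseteq> K"
proof -
  have "K \<inter> C \<noteq> {}" using assms(4) by blast
  then have "cn_connected S F (K \<union> C)"
    using cn_connected_Un[OF _ assms(2)] cn_componentsD[OF assms(1)] by blast
  moreover have "K \<union> C \<subseteq> A" using assms cn_componentsD by blast
  ultimately have "K \<union> C = K" using assms(1) unfolding cn_components_def by blast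
  then show ?thesis by blast
qed

lemma cn_connected_UN_chain:
  assumes "\<And>n. cn_connected S F (H n)" "\<And>i. H i \<inter> H (Suc i) \<noteq> {}" "i \<le> j"
  shows "cn_connected S F (\<Union>k\<in>{i..j}. H k)"
  using assms(3)
proof (induction j rule: dec_induct)
  case (step n)
  have "(\<Union>k\<in>{i..Suc n}. H k) = (\<Union>k\<in>{i..n}. H k) \<union> H (Suc n)"
    using step.hyps(1) by (simp add: atLeastAtMostSuc_conv Un_commute)
  moreover have "H n \<subseteq> (\<Union>k\<in>{i..n}. H k)" using step.hyps(1) by auto
  moreover have "(\<Union>k\<in>{i..n}. H k) \<inter> H (Suc n) \<noteq> {}"
    using calculation(2) assms(2)[of n] by blast
  ultimately show ?case using cn_connected_Un[OF step.IH assms(1)] by simp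
qed (use assms(1) in simp)

lemma cn_connected_UN_atLeast:
  assumes "\<And>n. cn_connected S F (H n)" "\<And>i. H i \<inter> H (Suc i) \<noteq> {}"
  shows "cn_connected S F (\<Union>k\<in>{n..}. H k)"
proof -
  have "\<exists>G\<in>F. G \<subseteq> (\<Union>k\<in>{n..}. H k) \<and> x \<in> G \<and> y \<in> G"
    if xy: "x \<in> (\<Union>k\<in>{n..}. H k)" "y \<in> (\<Union>k\<in>{n..}. H k)" for x y
  proof -
    obtain i j where ij: "i \<ge> n" "x \<in> H i" "j \<ge> n" "y \<in> H j" using xy by blast
    define seg where "seg = (\<Union>k\<in>{min i j..max i j}. H k)"
    have "cn_connected S F seg" unfolding seg_def by (rule cn_connected_UN_chain[where H = H, OF assms]) simp
    moreover have "x \<in> seg" "y \<in> seg" unfolding seg_def using ij by auto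
    ultimately obtain G where "G \<in> F" "G \<subseteq> seg" "x \<in> G" "y \<in> G"
      unfolding cn_connected_def by blast
    moreover have "seg \<subseteq> (\<Union>k\<in>{n..}. H k)" unfolding seg_def using ij by force
    ultimately show ?thesis by blast
  qed
  moreover have "(\<Union>k\<in>{n..}. H k) \<subseteq> S" using assms(1) cn_connected_subset by blast
  ultimately show ?thesis unfolding cn_connected_def by blast
qed

text \<open>A final segment of the necklace avoids \<open>X\<close>; being connected, it lies in one component of
  \<open>N - X\<close>, which therefore contains almost all of \<open>N\<close>.\<close>
lemma necklace_cofinite_component:
  assumes N: "necklace S F N" and X: "finite X"
  shows "\<exists>K\<in>cn_components S F (N - X). finite (N - K)"
proof -
  obtain H :: "nat \<Rightarrow> 'a set" where H: "\<And>n. finite (H n)" "\<And>n. cn_connected S F (H n)"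
    "N = (\<Union>n. H n)" and meet: "\<And>i j. H i \<inter> H j \<noteq> {} \<longleftrightarrow> i \<le> j + 1 \<and> j \<le> i + 1"
    using necklace_chain[OF N] by blast
  obtain n0 where n0: "\<forall>i\<ge>n0. H i \<inter> X = {}" using beads_eventually_avoid[OF meet X] by blast
  define T where "T = (\<Union>i\<in>{n0..}. H i)"
  have T_conn: "cn_connected S F T"
    unfolding T_def by (rule cn_connected_UN_atLeast[OF H(2)]) (use meet in simp)
  have T_sub: "T \<subseteq> N - X" unfolding T_def H(3) using n0 by blast
  have "H n0 \<noteq> {}" using meet[of n0 n0] by simp
  then obtain p where p: "p \<in> H n0" by blast
  then have "p \<in> T" unfolding T_def by blast
  define K where "K = component_of (N - X) p"
  have K: "K \<in> cn_components S F (N - X)"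
    unfolding K_def using component_of_in_components \<open>p \<in> T\<close> T_sub necklace_subset[OF N] by blast
  have "T \<subseteq> K" unfolding K_def by (rule subset_component_of[OF T_conn T_sub \<open>p \<in> T\<close>])
  have "N - K \<subseteq> (\<Union>i<n0. H i)"
  proof
    fix x assume x: "x \<in> N - K"
    then obtain i where "x \<in> H i" using H(3) by blast
    moreover have "x \<notin> T" using x \<open>T \<subseteq> K\<close> by blast
    ultimately show "x \<in> (\<Union>i<n0. H i)" unfolding T_def by (meson UN_I atLeast_iff lessThan_iff not_le)
  qed
  then have "finite (N - K)" using H(1) finite_subset by blast
  then show ?thesis using K by blast
qed

lemma necklace_tail:
  assumes N: "necklace S F N" and X: "finite X"
  shows "necklace_tail S F N X \<in> cn_components S F (N - X)"
    and "finite (N - necklace_tail S F N X)"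
proof -
  obtain K where K: "K \<in> cn_components S F (N - X)" "finite (N - K)"
    using necklace_cofinite_component[OF N X] by blast
  have unique: "K' = K" if K': "K' \<in> cn_components S F (N - X)" "finite (N - K')" for K'
  proof -
    have meet: "K' \<inter> K \<noteq> {}" "K \<inter> K' \<noteq> {}"
      using cofinite_subsets_meet[OF necklace_infinite[OF N] K(2) K'(2)] by blast+
    have "K' \<subseteq> K" using cn_components_absorb[OF K(1) _ _ meet(1)] cn_componentsD[OF K'(1)] by blast
    moreover have "K \<subseteq> K'" using cn_components_absorb[OF K'(1) _ _ meet(2)] cn_componentsD[OF K(1)] by blast
    ultimately show ?thesis by blast
  qed
  have "necklace_tail S F N X = K"
    unfolding necklace_tail_def by (rule the_equality) (use K unique in blast)+
  then show "necklace_tail S F N X \<in> cn_components S F (N - X)" "finite (N - necklace_tail S F N X)"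
    using K by simp_all
qed

end

section \<open>Normal spanning trees\<close>

locale normal_spanning_connectoid = connectoid_space S F
  for S :: "'a set" and F :: "'a set set" +
  fixes V :: "'a set" and E :: "('a \<times> 'a) set" and r :: 'a
  assumes normal_spanning: "normal_spanning_tree S F V E r"
begin

lemma V_eq_S: "V = S"
  using normal_spanning unfolding normal_spanning_tree_def by blast

lemma weak_normal: "weak_normal_tree S F V E r"
  using normal_spanning unfolding normal_spanning_tree_def normal_tree_def by blast

sublocale rooted_tree V E r
  using weak_normal unfolding weak_normal_tree_def by unfold_locales blast+

lemma connected_common_lower_bound:
  assumes "cn_connected S F C" "u \<in> C" "v \<in> C" "\<not> u \<preceq> v" "\<not> v \<preceq> u"
  shows "\<exists>w\<in>C. w \<preceq> u \<and> w \<preceq> v"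
proof -
  have "u \<in> C \<inter> V" "v \<in> C \<inter> V" using assms(1-3) cn_connected_subset V_eq_S by blast+
  then show ?thesis using weak_normal assms(1,4,5) unfolding weak_normal_tree_def by blast
qed

lemma connected_above:
  assumes "u \<preceq> v"
  shows "\<exists>C. cn_connected S F C \<and> u \<in> C \<and> v \<in> C \<and> C \<inter> tree_down_strict V E r u = {}"
  using weak_normal assms unfolding weak_normal_tree_def by blast

text \<open>By normality, a vertex of \<open>C\<close> outside \<open>up c\<close> would have a common lower bound in \<open>C\<close> with
  \<open>u\<close>, and that bound would lie strictly below \<open>c\<close>.\<close>
lemma connected_up_closed:
  assumes "cn_connected S F C" "C \<inter> tree_down_strict V E r c = {}" "u \<in> C" "c \<preceq> u"
  shows "C \<subseteq> up c"
proof
  fix v assume v: "v \<in> C"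
  have "c \<preceq> v"
  proof (cases "u \<preceq> v \<or> v \<preceq> u")
    case True
    then show ?thesis
    proof
      assume "u \<preceq> v"
      then show ?thesis using tree_le_trans assms(4) by blast
    next
      assume "v \<preceq> u"
      then have "v \<preceq> c \<or> c \<preceq> v" using tree_le_linear_below assms(4) by blast
      then show ?thesis using assms(2) v tree_down_strict_iff by blast
    qed
  next
    case False
    then obtain w where w: "w \<in> C" "w \<preceq> u" "w \<preceq> v"
      using connected_common_lower_bound[OF assms(1,3) v] by blast
    then have "w \<preceq> c \<or> c \<preceq> w" using tree_le_linear_below assms(4) by blast
    then show ?thesis using assms(2) w tree_down_strict_iff tree_le_trans by blast
  qed
  then show "v \<in> up c" using up_iff by blast
qed

lemma necklace_trunk_child:
  assumes N: "necklace S F N" and t: "t \<in> trunk N"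
  shows "\<exists>c\<in>trunk N. root_path c = root_path t @ [c]"
proof -
  have tV: "t \<in> V" using t trunk_iff by blast
  define X where "X = set (root_path t)"
  define K where "K = necklace_tail S F N X"
  have K: "K \<in> cn_components S F (N - X)" "finite (N - K)"
    using necklace_tail[OF N] unfolding K_def X_def by auto
  have K_conn: "cn_connected S F K" and K_sub: "K \<subseteq> N - X" using cn_componentsD[OF K(1)] by auto
  have "finite (N - up t)" using t trunk_iff by blast
  then obtain u where u: "u \<in> N" "u \<in> K" "u \<in> up t"
    using cofinite_subsets_meet[OF necklace_infinite[OF N] K(2)] by blast
  have "u \<noteq> t" using u K_sub in_root_path_self[OF tV] unfolding X_def by blast
  moreover have "t \<preceq> u" using u up_iff by blast
  ultimately obtain c where c: "c \<in> V" "root_path c = root_path t @ [c]" "c \<preceq> u"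
    using exists_child_below by blast
  have "tree_down_strict V E r c = X" unfolding X_def using child_props(4)[OF c(2) c(1) tV] .
  then have "K \<inter> tree_down_strict V E r c = {}" using K_sub by blast
  then have "K \<subseteq> up c" using connected_up_closed[OF K_conn _ u(2) c(3)] by blast
  then have "N - up c \<subseteq> N - K" by blast
  then have "finite (N - up c)" by (rule finite_subset[OF _ K(2)])
  then have "c \<in> trunk N" using c(1) trunk_iff by blast
  then show ?thesis using c(2) by blast
qed

lemma trunk_necklace:
  assumes N: "necklace S F N"
  shows "\<exists>Q. rooted_ray Q \<and> trunk N = range Q"
proof (rule trunk_eq_rooted_ray)
  show "infinite N" using necklace_infinite[OF N] .
  show "N \<subseteq> V" using necklace_subset[OF N] V_eq_S by simp
qed (rule necklace_trunk_child[OF N])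

text \<open>Normality: the rooted ray \<open>Q\<close> is almost contained in a necklace, whose trunk must then be \<open>Q\<close>.\<close>
lemma necklace_with_trunk:
  assumes Q: "rooted_ray Q"
  shows "\<exists>N. necklace S F N \<and> trunk N = range Q"
proof -
  obtain N where N: "necklace S F N" "finite {n. Q n \<notin> N}"
    using normal_spanning Q unfolding normal_spanning_tree_def normal_tree_def rooted_ray_def by blast
  obtain Q' where Q': "rooted_ray Q'" "trunk N = range Q'" using trunk_necklace[OF N(1)] by blast
  have inj: "inj Q" using Q unfolding rooted_ray_def is_ray_def by blast
  have "range Q' \<subseteq> range Q"
  proof
    fix x assume "x \<in> range Q'"
    then have x: "x \<in> trunk N" using Q'(2) by simp
    then have "finite (Q -` (N - up x))" using inj finite_vimageI trunk_iff by blast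
    then have "finite ({n. Q n \<notin> N} \<union> Q -` (N - up x))" using N(2) by simp
    then obtain i where "i \<notin> {n. Q n \<notin> N} \<union> Q -` (N - up x)"
      using infinite_UNIV_nat ex_new_if_finite by metis
    then have "x \<preceq> Q i" using up_iff by simp
    then show "x \<in> range Q" using tree_le_iff set_root_path_rooted_ray[OF Q] by auto
  qed
  then have "Q' = Q" using rooted_ray_eqI[OF Q Q'(1)] by blast
  then show ?thesis using N(1) Q'(2) by blast
qed

lemma trunks_of_necklaces: "trunk ` {N. necklace S F N} = {range Q | Q. rooted_ray Q}"
  using trunk_necklace necklace_with_trunk by fastforce

lemma necklace_tail_subset_component_of:
  assumes N: "necklace S F N" and X: "finite X" "X \<subseteq> S"
    and c: "c \<in> trunk N" and cX: "up c \<inter> X = {}"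
  shows "necklace_tail S F N X \<subseteq> component_of (S - X) c"
proof -
  define T where "T = necklace_tail S F N X"
  have T: "T \<in> cn_components S F (N - X)" "finite (N - T)"
    using necklace_tail[OF N X(1)] unfolding T_def by auto
  have T_conn: "cn_connected S F T" and T_sub: "T \<subseteq> N - X" using cn_componentsD[OF T(1)] by auto
  have "finite (N - up c)" using c trunk_iff by blast
  then obtain u where u: "u \<in> T" "u \<in> up c"
    using cofinite_subsets_meet[OF necklace_infinite[OF N] T(2)] by blast
  then obtain C where C: "cn_connected S F C" "c \<in> C" "u \<in> C" "C \<inter> tree_down_strict V E r c = {}"
    using connected_above up_iff by blast
  have "c \<preceq> c" using c trunk_iff tree_le_refl by blast
  then have "C \<subseteq> S - X" using connected_up_closed[OF C(1) C(4) C(2)] cX up_subset V_eq_S by blast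
  moreover have "T \<inter> C \<noteq> {}" using u C by blast
  then have "cn_connected S F (T \<union> C)" using cn_connected_Un[OF T_conn C(1)] by blast
  moreover have "T \<subseteq> S - X" using T_sub necklace_subset[OF N] by blast
  ultimately have "T \<union> C \<subseteq> component_of (S - X) c"
    using subset_component_of C(2) by (metis Un_iff le_sup_iff)
  then show ?thesis unfolding T_def by blast
qed

lemma necklace_equiv_imp_trunk_eq:
  assumes N: "necklace S F N" and N': "necklace S F N'" and equiv: "necklace_equiv S F N N'"
  shows "trunk N = trunk N'"
proof (rule ccontr)
  assume ne: "trunk N \<noteq> trunk N'"
  obtain Q where Q: "rooted_ray Q" "trunk N = range Q" using trunk_necklace[OF N] by blast
  obtain Q' where Q': "rooted_ray Q'" "trunk N' = range Q'" using trunk_necklace[OF N'] by blast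
  have "Q \<noteq> Q'" using ne Q(2) Q'(2) by auto
  then obtain c c' where c: "c \<in> range Q" "c' \<in> range Q'" "up c \<inter> up c' = {}"
    "tree_down_strict V E r c = tree_down_strict V E r c'" "finite (tree_down_strict V E r c)"
    using rooted_rays_branch[OF Q(1) Q'(1)] by blast
  define X where "X = tree_down_strict V E r c"
  have "X \<subseteq> S" unfolding X_def tree_down_strict_def tree_down_def using V_eq_S by blast
  then obtain K where K: "K \<in> cn_components S F (S - X)"
    "necklace_tail S F N X \<subseteq> K" "necklace_tail S F N' X \<subseteq> K"
    using equiv c(5) unfolding necklace_equiv_def X_def by blast
  have "finite (N - up c)" "finite (N' - up c')" using c Q(2) Q'(2) trunk_iff by auto
  then obtain u v where u: "u \<in> necklace_tail S F N X" "u \<in> up c"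
    and v: "v \<in> necklace_tail S F N' X" "v \<in> up c'"
    using cofinite_subsets_meet[OF necklace_infinite[OF N] necklace_tail(2)[OF N]]
      cofinite_subsets_meet[OF necklace_infinite[OF N'] necklace_tail(2)[OF N']] c(5) X_def
    by meson
  have "cn_connected S F K" "K \<inter> tree_down_strict V E r c = {}"
    using cn_componentsD[OF K(1)] unfolding X_def by auto
  then have "K \<subseteq> up c" using connected_up_closed u K(2) up_iff by blast
  then show False using v K(3) c(3) by blast
qed

lemma trunk_eq_imp_necklace_equiv:
  assumes N: "necklace S F N" and N': "necklace S F N'" and eq: "trunk N = trunk N'"
  shows "necklace_equiv S F N N'"
  unfolding necklace_equiv_def
proof (intro allI impI)
  fix X assume X: "finite X \<and> X \<subseteq> S"
  obtain Q where Q: "rooted_ray Q" "trunk N = range Q" using trunk_necklace[OF N] by blast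
  obtain n where n: "up (Q n) \<inter> X = {}" using up_rooted_ray_avoids[OF Q(1)] X by blast
  have trunk: "Q n \<in> trunk N" "Q n \<in> trunk N'" using Q eq by auto
  have "Q n \<in> up (Q n)" using up_iff tree_le_refl rooted_ray_in_V[OF Q(1)] by blast
  then have "Q n \<in> S - X" using n rooted_ray_in_V[OF Q(1)] V_eq_S by blast
  then have "component_of (S - X) (Q n) \<in> cn_components S F (S - X)"
    by (intro component_of_in_components) auto
  moreover have "necklace_tail S F N X \<subseteq> component_of (S - X) (Q n)"
    using necklace_tail_subset_component_of[OF N _ _ trunk(1) n] X by blast
  moreover have "necklace_tail S F N' X \<subseteq> component_of (S - X) (Q n)"
    using necklace_tail_subset_component_of[OF N' _ _ trunk(2) n] X by blast
  ultimately show "\<exists>K\<in>cn_components S F (S - X).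
      necklace_tail S F N X \<subseteq> K \<and> necklace_tail S F N' X \<subseteq> K"
    by blast
qed

lemma necklace_equiv_iff_trunk_eq:
  "necklace S F N \<Longrightarrow> necklace S F N' \<Longrightarrow> necklace_equiv S F N N' \<longleftrightarrow> trunk N = trunk N'"
  using necklace_equiv_imp_trunk_eq trunk_eq_imp_necklace_equiv by blast

end

theorem theorem1p2:
  fixes S :: "'a set" and \<F> :: "'a set set"
    and V :: "'a set" and E :: "('a \<times> 'a) set" and r :: 'a
  assumes "connectoid S \<F>"
    and "normal_spanning_tree S \<F> V E r"
  shows "\<exists>f. bij_betw f (cn_ends S \<F>) (graph_ends V E)"
proof -
  interpret normal_spanning_connectoid S \<F> V E r
    using assms by unfold_locales
  have "bij_betw (\<lambda>c. trunk (SOME N. N \<in> c)) (cn_ends S \<F>) {range Q | Q. rooted_ray Q}"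
    unfolding cn_ends_def
    by (rule bij_betw_classes[OF necklace_equiv_iff_trunk_eq trunks_of_necklaces])
  moreover have "bij_betw (\<lambda>c. trunk (range (SOME R. R \<in> c))) (graph_ends V E)
      {range Q | Q. rooted_ray Q}"
    unfolding graph_ends_def
    by (rule bij_betw_classes[where k = "\<lambda>R. trunk (range R)", OF ray_equiv_iff_trunk_eq trunks_of_rays])
  ultimately show ?thesis using bij_betw_trans bij_betw_inv_into by blast
qed

end
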